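(* Let $\mathcal G$ be a doubly connected molecular graph. Construct $\mathcal G_{new}$ from $\mathcal G$ as follows: add a new molecule $\mathcal M_{new}$; replace a diffusive edge $b_0$ of $\mathcal G$ joining molecules $\mathcal M_1$ and $\mathcal M_2$ by two diffusive edges, $b_1$ joining $\mathcal M_1$ and $\mathcal M_{new}$ and $b_2$ joining $\mathcal M_2$ and $\mathcal M_{new}$; and replace a blue solid edge $b$ of $\mathcal G$ joining molecules $\mathcal M_3$ and $\mathcal M_4$ by two blue solid edges, $b_3$ joining $\mathcal M_3$ and $\mathcal M_{new}$ and $b_4$ joining $\mathcal M_4$ and $\mathcal M_{new}$. Then: (i) if a blue solid edge of $\mathcal G$ different from $b$ is redundant in $\mathcal G$, then it is also redundant in $\mathcal G_{new}$; (ii) if $b$ is redundant in $\mathcal G$, then at least one of $b_3$, $b_4$ is redundant in $\mathcal G_{new}$; moreover, if one of $b_3,b_4$ that is redundant in $\mathcal G_{new}$ is changed into a diffusive edge, then the other one becomes redundant in the resulting graph.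
   Context: A molecular graph is a finite multigraph whose vertices are called molecules and each of whose edges joins two distinct molecules and is either a diffusive edge or a blue solid edge (parallel edges are allowed). A molecular graph is doubly connected if there exist two disjoint sets of edges, $\mathcal B_{black}$ consisting only of diffusive edges and $\mathcal B_{blue}$ consisting only of blue solid or diffusive edges, such that each of $\mathcal B_{black}$ and $\mathcal B_{blue}$ contains a spanning tree of the set of all molecules. A blue solid edge $e$ of a doubly connected graph is redundant if the graph obtained by deleting $e$ is still doubly connected. Changing a blue solid edge into a diffusive edge means replacing it by a diffusive edge with the same two endpoints. *)

theory Defs
  imports Main
begin

datatype ekind = Diffusive | BlueSolid

text \<open>A molecular graph: a finite set of molecules, a finite set of edge identifiers
  (so parallel edges are allowed), an endpoint map and an edge kind.\<close>
record ('v, 'e) mgraph =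
  mols :: "'v set"
  edges :: "'e set"
  endp :: "'e \<Rightarrow> 'v set"
  kind :: "'e \<Rightarrow> ekind"

definition wf_mgraph :: "('v, 'e) mgraph \<Rightarrow> bool" where
  "wf_mgraph G \<longleftrightarrow> finite (mols G) \<and> finite (edges G) \<and>
     (\<forall>e\<in>edges G. \<exists>x y. x \<noteq> y \<and> x \<in> mols G \<and> y \<in> mols G \<and> endp G e = {x, y})"

definition adj :: "('v, 'e) mgraph \<Rightarrow> 'e set \<Rightarrow> ('v \<times> 'v) set" where
  "adj G F = {(x, y). \<exists>e\<in>F. endp G e = {x, y}}"

definition connects :: "('v, 'e) mgraph \<Rightarrow> 'e set \<Rightarrow> bool" where
  "connects G F \<longleftrightarrow> (\<forall>x\<in>mols G. \<forall>y\<in>mols G. (x, y) \<in> (adj G F)\<^sup>*)"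

definition spanning_tree :: "('v, 'e) mgraph \<Rightarrow> 'e set \<Rightarrow> bool" where
  "spanning_tree G T \<longleftrightarrow> T \<subseteq> edges G \<and> connects G T \<and>
     (\<forall>e\<in>T. \<not> connects G (T - {e}))"

definition contains_spanning_tree :: "('v, 'e) mgraph \<Rightarrow> 'e set \<Rightarrow> bool" where
  "contains_spanning_tree G F \<longleftrightarrow> (\<exists>T\<subseteq>F. spanning_tree G T)"

definition doubly_connected :: "('v, 'e) mgraph \<Rightarrow> bool" where
  "doubly_connected G \<longleftrightarrow>
     (\<exists>Bblack Bblue. Bblack \<subseteq> edges G \<and> Bblue \<subseteq> edges G \<and> Bblack \<inter> Bblue = {} \<and>
        (\<forall>e\<in>Bblack. kind G e = Diffusive) \<and>
        (\<forall>e\<in>Bblue. kind G e = BlueSolid \<or> kind G e = Diffusive) \<and>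
        contains_spanning_tree G Bblack \<and> contains_spanning_tree G Bblue)"

definition delete_edge :: "('v, 'e) mgraph \<Rightarrow> 'e \<Rightarrow> ('v, 'e) mgraph" where
  "delete_edge G e = G\<lparr>edges := edges G - {e}\<rparr>"

definition redundant :: "('v, 'e) mgraph \<Rightarrow> 'e \<Rightarrow> bool" where
  "redundant G e \<longleftrightarrow> doubly_connected G \<and> e \<in> edges G \<and> kind G e = BlueSolid \<and>
     doubly_connected (delete_edge G e)"

definition make_diffusive :: "('v, 'e) mgraph \<Rightarrow> 'e \<Rightarrow> ('v, 'e) mgraph" where
  "make_diffusive G e = G\<lparr>kind := (kind G)(e := Diffusive)\<rparr>"

definition subdivide2 ::
  "('v, 'e) mgraph \<Rightarrow> 'v \<Rightarrow> 'e \<Rightarrow> 'e \<Rightarrow> 'e \<Rightarrow> 'e \<Rightarrow> 'e \<Rightarrow> 'e \<Rightarrow>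
     'v \<Rightarrow> 'v \<Rightarrow> 'v \<Rightarrow> 'v \<Rightarrow> ('v, 'e) mgraph" where
  "subdivide2 G mnew b0 b b1 b2 b3 b4 M1 M2 M3 M4 =
     \<lparr> mols = insert mnew (mols G),
       edges = (edges G - {b0, b}) \<union> {b1, b2, b3, b4},
       endp = (endp G)(b1 := {M1, mnew}, b2 := {M2, mnew}, b3 := {M3, mnew}, b4 := {M4, mnew}),
       kind = (kind G)(b1 := Diffusive, b2 := Diffusive, b3 := BlueSolid, b4 := BlueSolid) \<rparr>"

end

(* On a finite graph, containing a spanning tree is the same as being connected, so G is
   doubly connected iff it has two disjoint connected spanning edge sets, a black one of
   diffusive edges and a blue one.  Such a pair for G minus an edge is transported to G_new
   minus the corresponding edge: the star b3, b4 replaces b in the blue set, and the halves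
   b1, b2 replace b0.  If b0 is black, both halves become black.  If b0 is blue, cutting b0
   and b from the blue set still leaves one end of b0 joined to an end of b; that end reaches
   the new molecule through the star, the other end through its half of b0, and the other
   half attaches the new molecule to the black set.  So G - e yields G_new - e for every
   other edge e, and G - b yields both G_new - b3 and G_new - b4: when b is redundant, b3 and
   b4 both are, and making one of them diffusive keeps the other redundant. *)
theory Submission
  imports Defs
begin

lemma adjI: "e \<in> F \<Longrightarrow> endp G e = {x, y} \<Longrightarrow> (x, y) \<in> adj G F"
  unfolding adj_def by blast

lemma adj_mono: "F \<subseteq> F' \<Longrightarrow> adj G F \<subseteq> adj G F'"
  unfolding adj_def by blast

lemma sym_adj: "sym (adj G F)"
  unfolding adj_def sym_def by (auto simp: insert_commute)

lemma rtrancl_adj_sym: "(x, y) \<in> (adj G F)\<^sup>* \<Longrightarrow> (y, x) \<in> (adj G F)\<^sup>*"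
  by (rule symD[OF sym_rtrancl[OF sym_adj]])

lemma rtrancl_adj_via:
  "(x, v) \<in> (adj G F)\<^sup>* \<Longrightarrow> (y, v) \<in> (adj G F)\<^sup>* \<Longrightarrow>
   (x, y) \<in> (adj G F)\<^sup>*"
  by (meson rtrancl_adj_sym rtrancl_trans)

lemma connects_mono: "connects G F \<Longrightarrow> F \<subseteq> F' \<Longrightarrow> connects G F'"
  unfolding connects_def using rtrancl_mono[OF adj_mono] by blast

lemma delete_edge_simps [simp]:
  "mols (delete_edge G e) = mols G" "edges (delete_edge G e) = edges G - {e}"
  "endp (delete_edge G e) = endp G" "kind (delete_edge G e) = kind G"
  by (simp_all add: delete_edge_def)

lemma make_diffusive_simps [simp]:
  "mols (make_diffusive G a) = mols G" "edges (make_diffusive G a) = edges G"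
  "endp (make_diffusive G a) = endp G" "kind (make_diffusive G a) = (kind G)(a := Diffusive)"
  by (simp_all add: make_diffusive_def)

lemma connects_delete_edge [simp]: "connects (delete_edge G e) = connects G"
  by (simp add: fun_eq_iff connects_def adj_def)

lemma connects_make_diffusive [simp]: "connects (make_diffusive G a) = connects G"
  by (simp add: fun_eq_iff connects_def adj_def)

lemma connects_if_reaches_all:
  "(\<And>x. x \<in> mols G \<Longrightarrow> (r, x) \<in> (adj G F)\<^sup>*) \<Longrightarrow> connects G F"
  unfolding connects_def by (meson rtrancl_adj_sym rtrancl_trans)

lemma connects_insert_mol:
  assumes "connects H F" and "mols G = insert v (mols H)"
    and "u \<in> mols H" and "(u, v) \<in> (adj G F')\<^sup>*" and "adj H F \<subseteq> (adj G F')\<^sup>*"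
  shows "connects G F'"
proof (rule connects_if_reaches_all)
  fix x assume "x \<in> mols G"
  then consider "x = v" | "x \<in> mols H" using assms(2) by blast
  then show "(u, x) \<in> (adj G F')\<^sup>*"
  proof cases
    case 2
    then have "(u, x) \<in> (adj H F)\<^sup>*" using assms(1,3) unfolding connects_def by blast
    then show ?thesis using rtrancl_subset_rtrancl[OF assms(5)] by blast
  qed (use assms(4) in simp)
qed

text \<open>Cutting the edge e0 and an edge e1 whose ends lie in P leaves one end of e0
  connected to P: otherwise the molecules reachable from the ends of e0 would form a
  union of components of the whole graph that misses P.\<close>
lemma connects_Diff_reaches:
  assumes conn: "connects H F" and e0: "endp H e0 = {x0, y0}" "x0 \<in> mols H"
    and e1: "e1 \<in> F \<Longrightarrow> endp H e1 \<subseteq> P" and p: "p \<in> P" "p \<in> mols H"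
  shows "\<exists>x\<in>{x0, y0}. \<exists>q\<in>P. (x, q) \<in> (adj H (F - {e0, e1}))\<^sup>*"
proof (rule ccontr)
  let ?S = "(adj H (F - {e0, e1}))\<^sup>* `` {x0, y0}"
  assume "\<not> ?thesis"
  then have S_P: "?S \<inter> P = {}" by blast
  have "z \<in> ?S" if "(x0, z) \<in> (adj H F)\<^sup>*" for z
    using that
  proof (induction rule: rtrancl_induct)
    case (step y z)
    then obtain e where e: "e \<in> F" "endp H e = {y, z}" unfolding adj_def by blast
    consider "e = e0" | "e = e1" | "e \<in> F - {e0, e1}" using e(1) by blast
    then show ?case
    proof cases
      case 1
      then show ?thesis using e(2) e0(1) by (auto simp: doubleton_eq_iff)
    next
      case 2
      then show ?thesis using e e1 S_P step.IH by blast
    next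
      case 3
      then have "(y, z) \<in> adj H (F - {e0, e1})" using e(2) by (rule adjI)
      then show ?thesis using step.IH by (blast intro: rtrancl_into_rtrancl)
    qed
  qed blast
  then have "p \<in> ?S" using conn e0(2) p(2) unfolding connects_def by blast
  then show False using S_P p(1) by blast
qed

lemma contains_spanning_tree_iff_connects:
  assumes "finite (edges G)" and "F \<subseteq> edges G"
  shows "contains_spanning_tree G F \<longleftrightarrow> connects G F"
proof
  assume "contains_spanning_tree G F"
  then show "connects G F"
    unfolding contains_spanning_tree_def spanning_tree_def by (blast intro: connects_mono)
next
  assume "connects G F"
  then obtain T where T: "T \<subseteq> F" "connects G T"
    and min: "\<And>T'. T' \<subseteq> F \<Longrightarrow> connects G T' \<Longrightarrow> card T \<le> card T'"
    using ex_has_least_nat[where P = "\<lambda>T. T \<subseteq> F \<and> connects G T" and k = F and m = card]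
    by blast
  have "finite T" using T(1) assms by (meson finite_subset)
  have "\<not> connects G (T - {e})" if "e \<in> T" for e
    using min[of "T - {e}"] card_Diff1_less[OF \<open>finite T\<close> that] T(1) by fastforce
  then have "spanning_tree G T" unfolding spanning_tree_def using T assms(2) by blast
  then show "contains_spanning_tree G F"
    unfolding contains_spanning_tree_def using T(1) by blast
qed

lemma ekind_BlueSolid_or_Diffusive: "k = BlueSolid \<or> k = Diffusive"
  by (cases k) simp_all

definition doubly_connecting :: "('v, 'e) mgraph \<Rightarrow> 'e set \<Rightarrow> 'e set \<Rightarrow> bool" where
  "doubly_connecting G Bblack Bblue \<longleftrightarrow>
     Bblack \<subseteq> edges G \<and> Bblue \<subseteq> edges G \<and> Bblack \<inter> Bblue = {} \<and>
     (\<forall>e\<in>Bblack. kind G e = Diffusive) \<and> connects G Bblack \<and> connects G Bblue"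

lemma doubly_connected_iff_doubly_connecting:
  assumes "finite (edges G)"
  shows "doubly_connected G \<longleftrightarrow> (\<exists>Bblack Bblue. doubly_connecting G Bblack Bblue)"
  unfolding doubly_connected_def doubly_connecting_def
  using contains_spanning_tree_iff_connects[OF assms] ekind_BlueSolid_or_Diffusive by meson

lemma contains_spanning_tree_delete_edgeD:
  "contains_spanning_tree (delete_edge G e) F \<Longrightarrow> contains_spanning_tree G F"
  unfolding contains_spanning_tree_def spanning_tree_def
  by (simp only: delete_edge_simps connects_delete_edge) blast

lemma doubly_connected_delete_edgeD:
  assumes "doubly_connected (delete_edge G e)"
  shows "doubly_connected G"
proof -
  obtain Bblack Bblue where
    "Bblack \<subseteq> edges G - {e}" "Bblue \<subseteq> edges G - {e}" "Bblack \<inter> Bblue = {}"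
    "\<forall>e\<in>Bblack. kind G e = Diffusive"
    "\<forall>e\<in>Bblue. kind G e = BlueSolid \<or> kind G e = Diffusive"
    "contains_spanning_tree (delete_edge G e) Bblack"
    "contains_spanning_tree (delete_edge G e) Bblue"
    using assms unfolding doubly_connected_def delete_edge_simps
    by (elim exE conjE) (rule that)
  then show ?thesis
    unfolding doubly_connected_def
    by (intro exI[of _ Bblack] exI[of _ Bblue]) (auto intro: contains_spanning_tree_delete_edgeD)
qed

lemma doubly_connected_make_diffusive:
  assumes "doubly_connected G"
  shows "doubly_connected (make_diffusive G a)"
proof -
  obtain Bblack Bblue where
    "Bblack \<subseteq> edges G" "Bblue \<subseteq> edges G" "Bblack \<inter> Bblue = {}"
    "\<forall>e\<in>Bblack. kind G e = Diffusive"
    "contains_spanning_tree G Bblack" "contains_spanning_tree G Bblue"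
    using assms unfolding doubly_connected_def by (elim exE conjE) (rule that)
  moreover have "contains_spanning_tree (make_diffusive G a) = contains_spanning_tree G"
    by (simp add: fun_eq_iff contains_spanning_tree_def spanning_tree_def)
  ultimately show ?thesis
    unfolding doubly_connected_def
    by (intro exI[of _ Bblack] exI[of _ Bblue]) (simp add: ekind_BlueSolid_or_Diffusive)
qed

lemma delete_edge_make_diffusive:
  "delete_edge (make_diffusive G a) e = make_diffusive (delete_edge G e) a"
  by (simp add: delete_edge_def make_diffusive_def)

lemma redundant_make_diffusive:
  assumes "redundant G e" and "a \<noteq> e"
  shows "redundant (make_diffusive G a) e"
  using assms unfolding redundant_def delete_edge_make_diffusive
  by (simp add: doubly_connected_make_diffusive)

text \<open>The freedom in P and Y lets one locale describe both G_new minus an old edge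
  (star b3, b4 onto P = {M3, M4}) and G_new minus b3 (star b4 onto P = {M4}).\<close>
locale subdivision =
  fixes H G :: "('v, 'e) mgraph" and mnew :: 'v
    and b0 b1 b2 :: 'e and M1 M2 :: 'v and b :: 'e and P :: "'v set" and Y :: "'e set"
  assumes finite_edges: "finite (edges H)" "finite (edges G)"
    and mols_eq: "mols G = insert mnew (mols H)"
    and old_edge: "\<And>e. e \<in> edges H - {b0, b} \<Longrightarrow>
      e \<in> edges G \<and> endp G e = endp H e \<and> kind G e = kind H e"
    and b0: "endp H b0 = {M1, M2}" "M1 \<in> mols H" "M2 \<in> mols H"
    and b1: "b1 \<in> edges G - edges H" "kind G b1 = Diffusive" "endp G b1 = {M1, mnew}"
    and b2: "b2 \<in> edges G - edges H" "kind G b2 = Diffusive" "endp G b2 = {M2, mnew}"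
    and b: "b \<in> edges H \<Longrightarrow> kind H b = BlueSolid \<and> endp H b \<subseteq> P"
    and P: "P \<subseteq> mols H" "P \<noteq> {}"
    and Y: "Y \<subseteq> edges G - edges H" "\<And>p. p \<in> P \<Longrightarrow> \<exists>y\<in>Y. endp G y = {p, mnew}"
    and new_distinct: "b1 \<noteq> b2" "b1 \<notin> Y" "b2 \<notin> Y"
begin

lemma subdivision_swap: "subdivision H G mnew b0 b2 b1 M2 M1 b P Y"
  by unfold_locales (use finite_edges mols_eq old_edge b0 b1 b2 b P Y new_distinct in
      \<open>auto simp: insert_commute\<close>)

lemma old_edges:
  assumes "F \<subseteq> edges H - {b0, b}"
  shows "F \<subseteq> edges G" and "\<And>e. e \<in> F \<Longrightarrow> kind G e = kind H e"
  using assms old_edge by blast+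

lemma P_reaches_mnew: "p \<in> P \<Longrightarrow> Y \<subseteq> F \<Longrightarrow> (p, mnew) \<in> (adj G F)\<^sup>*"
  using Y(2) by (blast intro: adjI)

lemma adj_subset_rtrancl_adj:
  assumes "F \<subseteq> edges H" and "F - {b0, b} \<subseteq> F'"
    and "b0 \<in> F \<Longrightarrow> (M1, M2) \<in> (adj G F')\<^sup>*" and "b \<in> F \<Longrightarrow> Y \<subseteq> F'"
  shows "adj H F \<subseteq> (adj G F')\<^sup>*"
proof (rule subrelI)
  fix x y assume "(x, y) \<in> adj H F"
  then obtain e where e: "e \<in> F" "endp H e = {x, y}" unfolding adj_def by blast
  consider "e = b0" | "e = b" | "e \<in> F - {b0, b}" using e(1) by blast
  then show "(x, y) \<in> (adj G F')\<^sup>*"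
  proof cases
    case 1
    then have "{x, y} = {M1, M2}" using e(2) b0(1) by simp
    then show ?thesis using assms(3) e(1) 1 rtrancl_adj_sym by (auto simp: doubleton_eq_iff)
  next
    case 2
    then have "x \<in> P" "y \<in> P" using b e assms(1) by auto
    then show ?thesis using rtrancl_adj_via P_reaches_mnew assms(4) e(1) 2 by metis
  next
    case 3
    then have "endp G e = {x, y}" using old_edge e assms(1) by auto
    then show ?thesis using 3 assms(2) by (blast intro: adjI)
  qed
qed

lemma connects_subdivision:
  assumes "connects H F" and "F \<subseteq> edges H" and "F - {b0, b} \<subseteq> F'"
    and "b0 \<in> F \<Longrightarrow> (M1, M2) \<in> (adj G F')\<^sup>*" and "b \<in> F \<Longrightarrow> Y \<subseteq> F'"
    and "u \<in> mols H" and "(u, mnew) \<in> (adj G F')\<^sup>*"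
  shows "connects G F'"
  using adj_subset_rtrancl_adj[OF assms(2-5)]
  by (rule connects_insert_mol[OF assms(1) mols_eq assms(6,7)])

lemma b_not_black: "doubly_connecting H Bblack Bblue \<Longrightarrow> b \<notin> Bblack"
  using b unfolding doubly_connecting_def by fastforce

lemma doubly_connecting_if_b0_not_blue:
  assumes dc: "doubly_connecting H Bblack Bblue" and "b0 \<notin> Bblue"
  shows "doubly_connecting G (Bblack - {b0} \<union> {b1, b2}) (Bblue - {b} \<union> Y)"
proof -
  let ?Bblack = "Bblack - {b0} \<union> {b1, b2}" and ?Bblue = "Bblue - {b} \<union> Y"
  have black: "Bblack \<subseteq> edges H" "\<forall>e\<in>Bblack. kind H e = Diffusive" "connects H Bblack"
    and blue: "Bblue \<subseteq> edges H" "connects H Bblue" and disj: "Bblack \<inter> Bblue = {}"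
    using dc unfolding doubly_connecting_def by auto
  have "b \<notin> Bblack" using b_not_black[OF dc] .
  have old: "Bblack - {b0} \<subseteq> edges H - {b0, b}" "Bblue - {b} \<subseteq> edges H - {b0, b}"
    using black(1) blue(1) \<open>b \<notin> Bblack\<close> assms(2) by auto
  have M1_mnew: "(M1, mnew) \<in> (adj G ?Bblack)\<^sup>*" by (intro r_into_rtrancl adjI[OF _ b1(3)]) simp
  have M2_mnew: "(M2, mnew) \<in> (adj G ?Bblack)\<^sup>*" by (intro r_into_rtrancl adjI[OF _ b2(3)]) simp
  have M1_M2: "(M1, M2) \<in> (adj G ?Bblack)\<^sup>*" using M1_mnew M2_mnew by (rule rtrancl_adj_via)
  have "connects G ?Bblack"
    by (rule connects_subdivision[OF black(3,1) _ _ _ b0(2) M1_mnew])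
      (use M1_M2 \<open>b \<notin> Bblack\<close> in blast)+
  moreover obtain p where "p \<in> P" using P(2) by blast
  then have p_mnew: "(p, mnew) \<in> (adj G ?Bblue)\<^sup>*" by (rule P_reaches_mnew) blast
  have "connects G ?Bblue"
    by (rule connects_subdivision[OF blue(2,1) _ _ _ _ p_mnew])
      (use assms(2) P(1) \<open>p \<in> P\<close> in blast)+
  moreover have "\<forall>e\<in>?Bblack. kind G e = Diffusive"
    using old_edges(2)[OF old(1)] black(2) b1(2) b2(2) by auto
  moreover have "?Bblack \<subseteq> edges G" "?Bblue \<subseteq> edges G"
    using old_edges(1)[OF old(1)] old_edges(1)[OF old(2)] b1(1) b2(1) Y(1) by auto
  moreover have "?Bblack \<inter> ?Bblue = {}"
    using disj black(1) b1(1) b2(1) blue(1) Y(1) new_distinct by blast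
  ultimately show ?thesis unfolding doubly_connecting_def by blast
qed

lemma doubly_connecting_if_M1_reaches_P:
  assumes dc: "doubly_connecting H Bblack Bblue" and "b0 \<in> Bblue"
    and "p \<in> P" and "(M1, p) \<in> (adj H (Bblue - {b0, b}))\<^sup>*"
  shows "doubly_connecting G (insert b1 Bblack) (Bblue - {b0, b} \<union> insert b2 Y)"
proof -
  let ?Bblack = "insert b1 Bblack" and ?Bblue = "Bblue - {b0, b} \<union> insert b2 Y"
  have black: "Bblack \<subseteq> edges H" "\<forall>e\<in>Bblack. kind H e = Diffusive" "connects H Bblack"
    and blue: "Bblue \<subseteq> edges H" "connects H Bblue" and disj: "Bblack \<inter> Bblue = {}"
    using dc unfolding doubly_connecting_def by auto
  have old: "Bblack \<subseteq> edges H - {b0, b}" "Bblue - {b0, b} \<subseteq> edges H - {b0, b}"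
    using black(1) blue(1) b_not_black[OF dc] disj assms(2) by auto
  have M1_mnew: "(M1, mnew) \<in> (adj G ?Bblack)\<^sup>*" by (intro r_into_rtrancl adjI[OF _ b1(3)]) simp
  have "connects G ?Bblack"
    by (rule connects_subdivision[OF black(3,1) _ _ _ b0(2) M1_mnew]) (use old(1) in blast)+
  moreover have "connects G ?Bblue"
  proof -
    have "adj H (Bblue - {b0, b}) \<subseteq> (adj G ?Bblue)\<^sup>*"
      by (rule adj_subset_rtrancl_adj) (use blue(1) in blast)+
    then have "(M1, p) \<in> (adj G ?Bblue)\<^sup>*"
      using assms(4) rtrancl_subset_rtrancl by blast
    moreover have "(p, mnew) \<in> (adj G ?Bblue)\<^sup>*" using assms(3) by (rule P_reaches_mnew) blast
    moreover have M2_mnew: "(M2, mnew) \<in> (adj G ?Bblue)\<^sup>*"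
      by (intro r_into_rtrancl adjI[OF _ b2(3)]) simp
    ultimately have M1_M2: "(M1, M2) \<in> (adj G ?Bblue)\<^sup>*"
      by (meson rtrancl_adj_via rtrancl_trans)
    show ?thesis
      by (rule connects_subdivision[OF blue(2,1) _ _ _ b0(3) M2_mnew]) (use M1_M2 in blast)+
  qed
  moreover have "\<forall>e\<in>?Bblack. kind G e = Diffusive"
    using old_edges(2)[OF old(1)] black(2) b1(2) by auto
  moreover have "?Bblack \<subseteq> edges G" "?Bblue \<subseteq> edges G"
    using old_edges(1)[OF old(1)] old_edges(1)[OF old(2)] b1(1) b2(1) Y(1) by auto
  moreover have "?Bblack \<inter> ?Bblue = {}"
    using disj black(1) b1(1) b2(1) blue(1) Y(1) new_distinct by blast
  ultimately show ?thesis unfolding doubly_connecting_def by blast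
qed

theorem doubly_connected_if_doubly_connected:
  assumes "doubly_connected H"
  shows "doubly_connected G"
proof -
  obtain Bblack Bblue where dc: "doubly_connecting H Bblack Bblue"
    using assms doubly_connected_iff_doubly_connecting[OF finite_edges(1)] by blast
  show ?thesis
  proof (cases "b0 \<in> Bblue")
    case False
    then show ?thesis using doubly_connecting_if_b0_not_blue[OF dc]
      doubly_connected_iff_doubly_connecting[OF finite_edges(2)] by blast
  next
    case True
    have blue: "Bblue \<subseteq> edges H" "connects H Bblue"
      using dc unfolding doubly_connecting_def by auto
    obtain p0 where "p0 \<in> P" using P(2) by blast
    have "\<exists>x\<in>{M1, M2}. \<exists>p\<in>P. (x, p) \<in> (adj H (Bblue - {b0, b}))\<^sup>*"
      by (rule connects_Diff_reaches[OF blue(2) b0(1,2) _ \<open>p0 \<in> P\<close>])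
        (use blue(1) b \<open>p0 \<in> P\<close> P(1) in auto)
    then consider p where "p \<in> P" "(M1, p) \<in> (adj H (Bblue - {b0, b}))\<^sup>*"
      | p where "p \<in> P" "(M2, p) \<in> (adj H (Bblue - {b0, b}))\<^sup>*"
      by blast
    then show ?thesis
    proof cases
      case 1
      then show ?thesis using doubly_connecting_if_M1_reaches_P[OF dc True]
        doubly_connected_iff_doubly_connecting[OF finite_edges(2)] by blast
    next
      case 2
      then show ?thesis
        using subdivision.doubly_connecting_if_M1_reaches_P[OF subdivision_swap dc True]
        doubly_connected_iff_doubly_connecting[OF finite_edges(2)] by blast
    qed
  qed
qed

end

lemma wf_mgraph_endp_subset:
  "wf_mgraph G \<Longrightarrow> e \<in> edges G \<Longrightarrow> endp G e \<subseteq> mols G"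
  unfolding wf_mgraph_def by fastforce

lemma subdivide2_mols_edges [simp]:
  "mols (subdivide2 G v b0 b b1 b2 b3 b4 M1 M2 M3 M4) = insert v (mols G)"
  "edges (subdivide2 G v b0 b b1 b2 b3 b4 M1 M2 M3 M4) = edges G - {b0, b} \<union> {b1, b2, b3, b4}"
  by (simp_all add: subdivide2_def)

lemma subdivide2_new_edges:
  assumes "distinct [b1, b2, b3, b4]"
  shows "endp (subdivide2 G v b0 b b1 b2 b3 b4 M1 M2 M3 M4) b1 = {M1, v}"
    and "endp (subdivide2 G v b0 b b1 b2 b3 b4 M1 M2 M3 M4) b2 = {M2, v}"
    and "endp (subdivide2 G v b0 b b1 b2 b3 b4 M1 M2 M3 M4) b3 = {M3, v}"
    and "endp (subdivide2 G v b0 b b1 b2 b3 b4 M1 M2 M3 M4) b4 = {M4, v}"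
    and "kind (subdivide2 G v b0 b b1 b2 b3 b4 M1 M2 M3 M4) b1 = Diffusive"
    and "kind (subdivide2 G v b0 b b1 b2 b3 b4 M1 M2 M3 M4) b2 = Diffusive"
    and "kind (subdivide2 G v b0 b b1 b2 b3 b4 M1 M2 M3 M4) b3 = BlueSolid"
    and "kind (subdivide2 G v b0 b b1 b2 b3 b4 M1 M2 M3 M4) b4 = BlueSolid"
  using assms by (simp_all add: subdivide2_def)

context
  fixes G :: "('v, 'e) mgraph" and mnew M1 M2 M3 M4 :: 'v and b0 b b1 b2 b3 b4 :: 'e
  assumes wf: "wf_mgraph G"
    and b0: "b0 \<in> edges G" "endp G b0 = {M1, M2}"
    and b: "b \<in> edges G" "kind G b = BlueSolid" "endp G b = {M3, M4}"
    and fresh: "b1 \<notin> edges G" "b2 \<notin> edges G" "b3 \<notin> edges G" "b4 \<notin> edges G"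
    and distinct: "distinct [b1, b2, b3, b4]"
begin

lemma finite_edges_G: "finite (edges G)"
  using wf unfolding wf_mgraph_def by blast

lemma molecules_in_mols: "M1 \<in> mols G" "M2 \<in> mols G" "M3 \<in> mols G" "M4 \<in> mols G"
  using wf_mgraph_endp_subset[OF wf b0(1)] wf_mgraph_endp_subset[OF wf b(1)] b0(2) b(3)
  by auto

lemma subdivide2_old_edge:
  assumes "e \<in> edges G"
  shows "endp (subdivide2 G mnew b0 b b1 b2 b3 b4 M1 M2 M3 M4) e = endp G e"
    and "kind (subdivide2 G mnew b0 b b1 b2 b3 b4 M1 M2 M3 M4) e = kind G e"
  using assms fresh by (auto simp: subdivide2_def)

lemma subdivision_delete_edge:
  assumes "e \<notin> {b1, b2, b3, b4}"
  shows "subdivision (delete_edge G e) (delete_edge (subdivide2 G mnew b0 b b1 b2 b3 b4 M1 M2 M3 M4) e)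
           mnew b0 b1 b2 M1 M2 b {M3, M4} {b3, b4}"
  by unfold_locales
    (use assms finite_edges_G molecules_in_mols b0 b fresh distinct in
      \<open>auto simp: subdivide2_new_edges subdivide2_old_edge\<close>)

lemma subdivision_delete_b3:
  "subdivision (delete_edge G b) (delete_edge (subdivide2 G mnew b0 b b1 b2 b3 b4 M1 M2 M3 M4) b3)
     mnew b0 b1 b2 M1 M2 b {M4} {b4}"
  by unfold_locales
    (use finite_edges_G molecules_in_mols b0 b fresh distinct in
      \<open>auto simp: subdivide2_new_edges subdivide2_old_edge\<close>)

lemma subdivision_delete_b4:
  "subdivision (delete_edge G b) (delete_edge (subdivide2 G mnew b0 b b1 b2 b3 b4 M1 M2 M3 M4) b4)
     mnew b0 b1 b2 M1 M2 b {M3} {b3}"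
  by unfold_locales
    (use finite_edges_G molecules_in_mols b0 b fresh distinct in
      \<open>auto simp: subdivide2_new_edges subdivide2_old_edge\<close>)

end

theorem claimA4:
  fixes G :: "('v, 'e) mgraph" and mnew M1 M2 M3 M4 :: 'v and b0 b b1 b2 b3 b4 :: 'e
  assumes "wf_mgraph G" and "doubly_connected G"
    and "b0 \<in> edges G" and "kind G b0 = Diffusive" and "endp G b0 = {M1, M2}"
    and "b \<in> edges G" and "kind G b = BlueSolid" and "endp G b = {M3, M4}"
    and "mnew \<notin> mols G"
    and "b1 \<notin> edges G" and "b2 \<notin> edges G" and "b3 \<notin> edges G" and "b4 \<notin> edges G"
    and "distinct [b1, b2, b3, b4]"
  defines "Gnew \<equiv> subdivide2 G mnew b0 b b1 b2 b3 b4 M1 M2 M3 M4"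
  shows "(\<forall>e. e \<in> edges G \<and> kind G e = BlueSolid \<and> e \<noteq> b \<and> redundant G e
              \<longrightarrow> redundant Gnew e)
       \<and> (redundant G b \<longrightarrow>
            (redundant Gnew b3 \<or> redundant Gnew b4)
          \<and> (redundant Gnew b3 \<longrightarrow> redundant (make_diffusive Gnew b3) b4)
          \<and> (redundant Gnew b4 \<longrightarrow> redundant (make_diffusive Gnew b4) b3))"
proof -
  note setting = assms(1,3,5-8,10-14)
  have "redundant Gnew e"
    if e: "e \<in> edges G" "kind G e = BlueSolid" "e \<noteq> b" "redundant G e" for e
  proof -
    have "e \<notin> {b1, b2, b3, b4}" "e \<noteq> b0" using e(1,2) assms(4,10-13) by auto
    then have "doubly_connected (delete_edge Gnew e)"
      using subdivision.doubly_connected_if_doubly_connected[OF subdivision_delete_edge[OF setting]]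
        e(4)
      unfolding Gnew_def redundant_def by blast
    then show ?thesis
      using e \<open>e \<noteq> b0\<close> subdivide2_old_edge[OF setting e(1)] unfolding redundant_def Gnew_def
      by (auto intro: doubly_connected_delete_edgeD)
  qed
  moreover have "redundant Gnew b3" "redundant Gnew b4" if "redundant G b"
  proof -
    have "doubly_connected (delete_edge G b)" using that unfolding redundant_def by blast
    then have "doubly_connected (delete_edge Gnew b3)" "doubly_connected (delete_edge Gnew b4)"
      using subdivision.doubly_connected_if_doubly_connected[OF subdivision_delete_b3[OF setting]]
        subdivision.doubly_connected_if_doubly_connected[OF subdivision_delete_b4[OF setting]]
      unfolding Gnew_def by blast+
    then show "redundant Gnew b3" "redundant Gnew b4"
      unfolding redundant_def Gnew_def using doubly_connected_delete_edgeD assms(14)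
      by (auto simp: subdivide2_new_edges)
  qed
  ultimately show ?thesis
    using assms(14) by (auto intro: redundant_make_diffusive)
qed

end
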